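(* Let $X$ be a real Hilbert space and $I$ either $[0,T]$ ($T>0$) or $[0,+\infty)$. Assume: $K\subset X$ is a nonempty closed convex cone; $A:X\to X$ satisfies $(Au-Av,u-v)_X\ge m_A\|u-v\|_X^2$ and $\|Au-Av\|_X\le L_A\|u-v\|_X$ for all $u,v\in X$, with $m_A,L_A>0$; $f\in C(I;X)$; $\mathcal{S}:C(I;X)\to C(I;X)$ is a history-dependent operator; $j:X\times K\to\mathbb{R}$ is such that $j(\eta,\cdot)$ is convex, positively homogeneous and Lipschitz continuous on $K$ for every $\eta\in X$, and there is $\alpha_j\ge0$ with $j(\eta_1,v_2)-j(\eta_1,v_1)+j(\eta_2,v_1)-j(\eta_2,v_2)\le\alpha_j\|\eta_1-\eta_2\|_X\|v_1-v_2\|_X$ for all $\eta_i\in X$, $v_i\in K$. Assume moreover $\alpha_j+1<m_A$. Then there exists a unique function $u\in C(I;K)$ such that $$-u(t)\in \mathrm{N}_{C(u(t),t)}\big(Au(t)+\mathcal{S}u(t)\big)\quad\forall\,t\in I.$$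
   Context: $\mathcal{S}$ is history-dependent if for every compact $\mathcal J\subset I$ there is $L_{\mathcal J}>0$ with $\|\mathcal{S}u_1(t)-\mathcal{S}u_2(t)\|_X\le L_{\mathcal J}\int_0^t\|u_1(s)-u_2(s)\|_X ds$ for all $u_1,u_2\in C(I;X)$, $t\in\mathcal J$. Define $J(\eta,v)=j(\eta,v)$ for $v\in K$, $J(\eta,v)=+\infty$ for $v\notin K$; $C(\eta)=\{\xi\in X: J(\eta,v)\ge(\xi,v)_X\ \forall v\in X\}$; $C(\eta,t)=f(t)-C(\eta)$. For a nonempty closed convex $D\subset X$, $\mathrm{N}_D(x)=\{\xi:(\xi,w-x)_X\le0\ \forall w\in D\}$ if $x\in D$, $\emptyset$ otherwise. *)

theory Defs
  imports "HOL-Analysis.Analysis" "HOL-Library.Extended_Real"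
begin

definition history_dependent :: "real set \<Rightarrow> ((real \<Rightarrow> 'a::real_normed_vector) \<Rightarrow> (real \<Rightarrow> 'a)) \<Rightarrow> bool" where
  "history_dependent I S \<longleftrightarrow>
     (\<forall>J. compact J \<and> J \<subseteq> I \<longrightarrow>
        (\<exists>L>0. \<forall>u1 u2 t. continuous_on I u1 \<and> continuous_on I u2 \<and> t \<in> J \<longrightarrow>
            norm (S u1 t - S u2 t) \<le> L * integral {0..t} (\<lambda>s. norm (u1 s - u2 s))))"

definition Jext :: "'a set \<Rightarrow> ('a \<Rightarrow> 'a \<Rightarrow> real) \<Rightarrow> 'a \<Rightarrow> 'a \<Rightarrow> ereal" where
  "Jext K j \<eta> v = (if v \<in> K then ereal (j \<eta> v) else \<infinity>)"

definition Cset :: "'a::real_inner set \<Rightarrow> ('a \<Rightarrow> 'a \<Rightarrow> real) \<Rightarrow> 'a \<Rightarrow> 'a set" where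
  "Cset K j \<eta> = {\<xi>. \<forall>v. Jext K j \<eta> v \<ge> ereal (inner \<xi> v)}"

definition Cset_t :: "'a::real_inner set \<Rightarrow> ('a \<Rightarrow> 'a \<Rightarrow> real) \<Rightarrow> (real \<Rightarrow> 'a) \<Rightarrow> 'a \<Rightarrow> real \<Rightarrow> 'a set" where
  "Cset_t K j f \<eta> t = (\<lambda>\<xi>. f t - \<xi>) ` Cset K j \<eta>"

definition normal_cone :: "'a::real_inner set \<Rightarrow> 'a \<Rightarrow> 'a set" where
  "normal_cone D x = (if x \<in> D then {\<xi>. \<forall>w\<in>D. inner \<xi> (w - x) \<le> 0} else {})"

end

theory Submission
  imports Defs
begin

(* For fixed g, the quasivariational inequality
     u \<in> K,  (A u - g, v - u) + j(u, v) - j(u, u) \<ge> 0  for all v \<in> K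
   has a unique solution qvi_solve g, which depends (m_A - \<alpha>_j)^-1-Lipschitz continuously on g.
   It is the Banach fixed point of a proximal-gradient map; the proximal points minimise
   \<phi> + ||. - z||^2/2 on K, and minimising sequences are Cauchy by the parallelogram law.
   Since K is a cone and j(u, .) is positively homogeneous, the support function of C(u) at u is
   j(u, u), so the inclusion -u(t) \<in> N_{C(u(t),t)}(A u(t) + S u(t)) says exactly that u(t) solves
   the inequality with g = f(t) - S u(t).  Solutions are therefore the fixed points of the
   history-dependent operator u \<mapsto> qvi_solve (f - S u).  On [0, T] such a fixed point exists by
   Banach's theorem for Bielecki's exponentially weighted sup norm and is unique by a Gronwall
   argument; on [0, \<infinity>) the solutions on [0, n] agree and glue together. *)

lemma nonneg_if_nonneg_add_small_multiples:
  fixes a b :: real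
  assumes "\<And>t. 0 < t \<Longrightarrow> t \<le> 1 \<Longrightarrow> 0 \<le> a + t * b"
  shows "0 \<le> a"
proof -
  have "((\<lambda>t. a + t * b) \<longlongrightarrow> a + 0 * b) (at_right 0)"
    by (intro tendsto_intros)
  moreover have "eventually (\<lambda>t. 0 \<le> a + t * b) (at_right (0::real))"
    unfolding eventually_at_right_field using assms by (intro exI[of _ 1]) auto
  ultimately show ?thesis
    using tendsto_lowerbound[of "\<lambda>t. a + t * b" "a + 0 * b" "at_right 0" 0] by simp
qed

lemma parallelogram_midpoint:
  fixes a b z :: "'a::real_inner"
  shows "(norm (a - b))\<^sup>2 + 4 * (norm (midpoint a b - z))\<^sup>2
       = 2 * (norm (a - z))\<^sup>2 + 2 * (norm (b - z))\<^sup>2"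
proof -
  have "midpoint a b - z = (1/2) *\<^sub>R ((a - z) + (b - z))"
    by (metis add_diff_add midpoint_plus_self scaleR_half_double)
  moreover have "a - b = (a - z) - (b - z)"
    by simp
  ultimately show ?thesis
    by (simp only:) (simp add: power2_norm_eq_inner algebra_simps)
qed

lemma norm_add_scaleR_power2:
  fixes a b :: "'a::real_inner"
  shows "(norm (a + t *\<^sub>R b))\<^sup>2 = (norm a)\<^sup>2 + 2 * t * inner a b + t\<^sup>2 * (norm b)\<^sup>2"
  unfolding power2_norm_eq_inner by (simp add: algebra_simps power2_eq_square inner_commute)

lemma prox_objective_bounded_below:
  fixes \<phi> :: "'a::real_normed_vector \<Rightarrow> real"
  assumes "L-lipschitz_on K \<phi>" "y0 \<in> K" "y \<in> K"
  shows "\<phi> y0 - L * norm (z - y0) - L\<^sup>2 / 2 \<le> \<phi> y + (norm (y - z))\<^sup>2 / 2"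
proof -
  have L: "0 \<le> L"
    using assms(1) by (simp add: lipschitz_on_def)
  have "\<phi> y0 - \<phi> y \<le> L * norm (y - y0)"
    using lipschitz_onD[OF assms] by (simp add: dist_norm dist_real_def abs_le_iff norm_minus_commute)
  also have "\<dots> \<le> L * norm (y - z) + L * norm (z - y0)"
    using norm_triangle_ineq[of "y - z" "z - y0"] L by (simp flip: distrib_left add: mult_left_mono)
  also have "L * norm (y - z) \<le> (norm (y - z))\<^sup>2 / 2 + L\<^sup>2 / 2"
    using zero_le_power2[of "norm (y - z) - L"] by (simp add: power2_eq_square algebra_simps)
  finally show ?thesis
    by simp
qed

lemma midpoint_in_convex:
  assumes "convex K" "a \<in> K" "b \<in> K"
  shows "midpoint a b \<in> K"
  using convexD[OF assms, of "1/2" "1/2"] by (simp add: midpoint_def scaleR_add_right inverse_eq_divide)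

lemma prox_objective_midpoint:
  fixes \<phi> :: "'a::real_inner \<Rightarrow> real"
  assumes "convex_on K \<phi>" "a \<in> K" "b \<in> K"
  shows "(norm (a - b))\<^sup>2 / 8 + (\<phi> (midpoint a b) + (norm (midpoint a b - z))\<^sup>2 / 2)
       \<le> ((\<phi> a + (norm (a - z))\<^sup>2 / 2) + (\<phi> b + (norm (b - z))\<^sup>2 / 2)) / 2"
proof -
  have "\<phi> (midpoint a b) \<le> (\<phi> a + \<phi> b) / 2"
    using convex_onD[OF assms(1), of "1/2" a b] assms(2,3)
    by (simp add: midpoint_def scaleR_add_right inverse_eq_divide)
  then show ?thesis
    using parallelogram_midpoint[of a b z] by argo
qed

lemma Cauchy_if_norm_diff_power2_le:
  fixes y :: "nat \<Rightarrow> 'a::real_normed_vector"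
  assumes le: "\<And>k n. (norm (y k - y n))\<^sup>2 \<le> b k + b n" and b: "b \<longlonglongrightarrow> 0"
  shows "Cauchy y"
proof (rule metric_CauchyI)
  fix e :: real assume e: "0 < e"
  obtain N where N: "\<And>n. N \<le> n \<Longrightarrow> b n < e\<^sup>2 / 2"
    using order_tendstoD(2)[OF b, of "e\<^sup>2 / 2"] e unfolding eventually_sequentially by auto
  have "dist (y k) (y n) < e" if "N \<le> k" "N \<le> n" for k n
  proof -
    have "(norm (y k - y n))\<^sup>2 < e\<^sup>2"
      using le[of k n] N[OF that(1)] N[OF that(2)] by linarith
    then show ?thesis
      using e by (simp add: dist_norm power2_less_imp_less)
  qed
  then show "\<exists>M. \<forall>m\<ge>M. \<forall>n\<ge>M. dist (y m) (y n) < e"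
    by blast
qed

lemma prox_minimizer_exists:
  fixes K :: "'a::{real_inner,complete_space} set" and \<phi> :: "'a \<Rightarrow> real" and z :: 'a
  assumes K: "K \<noteq> {}" "closed K" and cvx: "convex_on K \<phi>" and lip: "L-lipschitz_on K \<phi>"
  defines "F \<equiv> \<lambda>y. \<phi> y + (norm (y - z))\<^sup>2 / 2"
  shows "\<exists>p\<in>K. \<forall>v\<in>K. F p \<le> F v"
proof -
  obtain y0 where y0: "y0 \<in> K"
    using K by auto
  define m where "m = Inf (F ` K)"
  have bdd: "bdd_below (F ` K)"
    using prox_objective_bounded_below[OF lip y0] unfolding F_def by (intro bdd_belowI2)
  have m_le: "m \<le> F y" if "y \<in> K" for y
    unfolding m_def using bdd that by (auto intro: cInf_lower)
  have "\<exists>y\<in>K. F y < m + inverse (real (Suc n))" for n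
    using cInf_less_iff[of "F ` K" "m + inverse (real (Suc n))"] K bdd unfolding m_def by simp
  then obtain y where yK: "\<And>n. y n \<in> K" and yF: "\<And>n. F (y n) < m + inverse (real (Suc n))"
    by metis
  have y_close: "(norm (y k - y n))\<^sup>2 \<le> 4 * inverse (real (Suc k)) + 4 * inverse (real (Suc n))"
    for k n
    using prox_objective_midpoint[OF cvx yK yK, of k n z] yF[of k] yF[of n]
      m_le[OF midpoint_in_convex[OF convex_on_imp_convex[OF cvx] yK[of k] yK[of n]]]
    unfolding F_def by argo
  have "Cauchy y"
  proof (rule Cauchy_if_norm_diff_power2_le)
    show "(\<lambda>n. 4 * inverse (real (Suc n))) \<longlonglongrightarrow> 0"
      using tendsto_mult_right_zero[OF LIMSEQ_inverse_real_of_nat] by simp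
  qed (rule y_close)
  then obtain p where yp: "y \<longlonglongrightarrow> p"
    using Cauchy_convergent_iff convergent_def by blast
  have pK: "p \<in> K"
    using closed_sequentially[OF K(2)] yK yp by blast
  have "continuous_on K F"
    unfolding F_def by (intro continuous_intros lipschitz_on_continuous_on[OF lip]) auto
  then have "(\<lambda>n. F (y n)) \<longlonglongrightarrow> F p"
    by (rule continuous_on_tendsto_compose[OF _ yp pK]) (simp add: yK)
  moreover have "(\<lambda>n. m + inverse (real (Suc n))) \<longlonglongrightarrow> m + 0"
    by (intro tendsto_intros LIMSEQ_inverse_real_of_nat)
  ultimately have "F p \<le> m + 0"
    by (rule LIMSEQ_le) (use yF less_imp_le in auto)
  then show ?thesis
    using pK m_le by (auto intro: order_trans)
qed

lemma prox_minimizer_variational_inequality: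
  fixes \<phi> :: "'a::real_inner \<Rightarrow> real"
  assumes cvx: "convex_on K \<phi>" and p: "p \<in> K"
    and min: "\<And>w. w \<in> K \<Longrightarrow> \<phi> p + (norm (p - z))\<^sup>2 / 2 \<le> \<phi> w + (norm (w - z))\<^sup>2 / 2"
    and v: "v \<in> K"
  shows "0 \<le> inner (p - z) (v - p) + \<phi> v - \<phi> p"
proof (rule nonneg_if_nonneg_add_small_multiples)
  fix t :: real assume t: "0 < t" "t \<le> 1"
  define w where "w = (1 - t) *\<^sub>R p + t *\<^sub>R v"
  have "w \<in> K"
    using convexD_alt[OF convex_on_imp_convex[OF cvx] p v] t by (simp add: w_def)
  then have "\<phi> p + (norm (p - z))\<^sup>2 / 2 \<le> \<phi> w + (norm (w - z))\<^sup>2 / 2"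
    by (rule min)
  moreover have "\<phi> w \<le> (1 - t) * \<phi> p + t * \<phi> v"
    using convex_onD[OF cvx] p v t by (simp add: w_def)
  moreover have "(norm (w - z))\<^sup>2 = (norm (p - z))\<^sup>2 + 2 * t * inner (p - z) (v - p) + t\<^sup>2 * (norm (v - p))\<^sup>2"
    using norm_add_scaleR_power2[of "p - z" t "v - p"] by (simp add: w_def algebra_simps)
  ultimately have "0 \<le> t * (inner (p - z) (v - p) + \<phi> v - \<phi> p + t * ((norm (v - p))\<^sup>2 / 2))"
    by (simp add: algebra_simps power2_eq_square)
  then show "0 \<le> inner (p - z) (v - p) + \<phi> v - \<phi> p + t * ((norm (v - p))\<^sup>2 / 2)"
    using t by (simp add: zero_le_mult_iff)
qed

lemma prox_exists:
  fixes K :: "'a::{real_inner,complete_space} set" and \<phi> :: "'a \<Rightarrow> real"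
  assumes "K \<noteq> {}" "closed K" "convex_on K \<phi>" "L-lipschitz_on K \<phi>"
  shows "\<exists>p\<in>K. \<forall>v\<in>K. 0 \<le> inner (p - z) (v - p) + \<phi> v - \<phi> p"
  using prox_minimizer_exists[OF assms, of z] prox_minimizer_variational_inequality[OF assms(3)]
  by metis

lemma forward_step_lipschitz:
  fixes A :: "'a::real_inner \<Rightarrow> 'a"
  assumes mon: "inner (A x - A y) (x - y) \<ge> m * (norm (x - y))\<^sup>2"
    and lip: "norm (A x - A y) \<le> L * norm (x - y)"
    and \<rho>: "0 \<le> \<rho>" "\<rho> * m \<le> 1"
  shows "norm ((x - \<rho> *\<^sub>R A x) - (y - \<rho> *\<^sub>R A y)) \<le> (1 - \<rho> * m + \<rho>\<^sup>2 * L\<^sup>2 / 2) * norm (x - y)"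
proof -
  define w a where "w = x - y" and "a = A x - A y"
  \<comment> \<open>\<open>q\<close> bounds \<open>sqrt (1 - 2 * \<rho> * m + \<rho>\<^sup>2 * L\<^sup>2)\<close> from above without a square root.\<close>
  define q where "q = 1 - \<rho> * m + \<rho>\<^sup>2 * L\<^sup>2 / 2"
  have "(norm a)\<^sup>2 \<le> L\<^sup>2 * (norm w)\<^sup>2"
    using power_mono[OF lip norm_ge_zero, of 2] by (simp add: w_def a_def power_mult_distrib)
  then have a2: "\<rho>\<^sup>2 * (norm a)\<^sup>2 \<le> \<rho>\<^sup>2 * L\<^sup>2 * (norm w)\<^sup>2"
    using mult_left_mono[of _ _ "\<rho>\<^sup>2"] by (simp add: mult.assoc)
  have mw: "2 * \<rho> * m * (norm w)\<^sup>2 \<le> 2 * \<rho> * inner w a"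
    using mon \<rho>(1) by (simp add: w_def a_def mult_left_mono inner_commute)
  have diff: "(x - \<rho> *\<^sub>R A x) - (y - \<rho> *\<^sub>R A y) = w + (- \<rho>) *\<^sub>R a"
    by (simp add: w_def a_def algebra_simps)
  have "(norm ((x - \<rho> *\<^sub>R A x) - (y - \<rho> *\<^sub>R A y)))\<^sup>2
      = (norm w)\<^sup>2 - 2 * \<rho> * inner w a + \<rho>\<^sup>2 * (norm a)\<^sup>2"
    unfolding diff norm_add_scaleR_power2 by simp
  also have "\<dots> \<le> (norm w)\<^sup>2 - 2 * \<rho> * m * (norm w)\<^sup>2 + \<rho>\<^sup>2 * L\<^sup>2 * (norm w)\<^sup>2"
    using a2 mw by linarith
  also have "\<dots> \<le> (q * norm w)\<^sup>2"
  proof -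
    have "(q * norm w)\<^sup>2 - ((norm w)\<^sup>2 - 2 * \<rho> * m * (norm w)\<^sup>2 + \<rho>\<^sup>2 * L\<^sup>2 * (norm w)\<^sup>2)
        = (\<rho> * m - \<rho>\<^sup>2 * L\<^sup>2 / 2)\<^sup>2 * (norm w)\<^sup>2"
      unfolding q_def by (simp add: power2_eq_square algebra_simps)
    moreover have "0 \<le> (\<rho> * m - \<rho>\<^sup>2 * L\<^sup>2 / 2)\<^sup>2 * (norm w)\<^sup>2"
      by simp
    ultimately show ?thesis
      by linarith
  qed
  finally have "(norm ((x - \<rho> *\<^sub>R A x) - (y - \<rho> *\<^sub>R A y)))\<^sup>2 \<le> (q * norm w)\<^sup>2" .
  moreover have "0 \<le> q * norm w"
    using \<rho> by (simp add: q_def)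
  ultimately show ?thesis
    unfolding q_def w_def by (rule power2_le_imp_le)
qed

lemma Cset_iff: "\<xi> \<in> Cset K j \<eta> \<longleftrightarrow> (\<forall>v\<in>K. inner \<xi> v \<le> j \<eta> v)"
  unfolding Cset_def Jext_def by auto

lemma neg_in_normal_cone_Cset_t_iff:
  "- u \<in> normal_cone (Cset_t K j f \<eta> t) x \<longleftrightarrow>
     f t - x \<in> Cset K j \<eta> \<and> (\<forall>\<xi>\<in>Cset K j \<eta>. inner \<xi> u \<le> inner (f t - x) u)"
proof -
  have "x \<in> (\<lambda>\<xi>. f t - \<xi>) ` Cset K j \<eta> \<longleftrightarrow> f t - x \<in> Cset K j \<eta>"
    by (auto intro: rev_image_eqI[of "f t - x"])
  moreover have "inner (- u) ((f t - \<xi>) - x) \<le> 0 \<longleftrightarrow> inner \<xi> u \<le> inner (f t - x) u" for \<xi>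
    by (auto simp: inner_diff_left inner_diff_right inner_commute)
  ultimately show ?thesis
    unfolding normal_cone_def Cset_t_def by auto
qed

locale elliptic_qvi =
  fixes K :: "'a::{real_inner, complete_space} set"
    and A :: "'a \<Rightarrow> 'a"
    and j :: "'a \<Rightarrow> 'a \<Rightarrow> real"
    and m_A L_A \<alpha>_j :: real
  assumes K: "K \<noteq> {}" "closed K" "cone K"
    and A_mon: "\<And>u v. inner (A u - A v) (u - v) \<ge> m_A * (norm (u - v))\<^sup>2"
    and A_lip: "\<And>u v. norm (A u - A v) \<le> L_A * norm (u - v)"
    and j_convex: "\<And>\<eta>. convex_on K (j \<eta>)"
    and j_homog: "\<And>\<eta> c v. c > 0 \<Longrightarrow> v \<in> K \<Longrightarrow> j \<eta> (c *\<^sub>R v) = c * j \<eta> v"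
    and j_lip: "\<And>\<eta>. \<exists>L. L-lipschitz_on K (j \<eta>)"
    and alpha: "\<alpha>_j \<ge> 0"
    and j_cross: "\<And>\<eta>1 \<eta>2 v1 v2. v1 \<in> K \<Longrightarrow> v2 \<in> K \<Longrightarrow>
        j \<eta>1 v2 - j \<eta>1 v1 + j \<eta>2 v1 - j \<eta>2 v2 \<le> \<alpha>_j * norm (\<eta>1 - \<eta>2) * norm (v1 - v2)"
    and small: "\<alpha>_j < m_A"
begin

definition qvi_solution :: "'a \<Rightarrow> 'a \<Rightarrow> bool" where
  "qvi_solution g u \<longleftrightarrow> u \<in> K \<and> (\<forall>v\<in>K. 0 \<le> inner (A u - g) (v - u) + j u v - j u u)"

lemma qvi_solution_lipschitz:
  assumes "qvi_solution g1 u1" "qvi_solution g2 u2"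
  shows "(m_A - \<alpha>_j) * norm (u1 - u2) \<le> norm (g1 - g2)"
proof -
  have u: "u1 \<in> K" "u2 \<in> K"
    using assms by (auto simp: qvi_solution_def)
  have "0 \<le> inner (A u1 - g1) (u2 - u1) + j u1 u2 - j u1 u1"
    and "0 \<le> inner (A u2 - g2) (u1 - u2) + j u2 u1 - j u2 u2"
    using assms u by (auto simp: qvi_solution_def)
  moreover have "inner (A u1 - g1) (u2 - u1) + inner (A u2 - g2) (u1 - u2)
      = inner (g1 - g2) (u1 - u2) - inner (A u1 - A u2) (u1 - u2)"
    by (simp add: algebra_simps inner_commute)
  moreover have "inner (g1 - g2) (u1 - u2) \<le> norm (g1 - g2) * norm (u1 - u2)"
    by (rule norm_cauchy_schwarz)
  ultimately have "(m_A - \<alpha>_j) * norm (u1 - u2) * norm (u1 - u2) \<le> norm (g1 - g2) * norm (u1 - u2)"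
    using j_cross[of u1 u2 u1 u2] A_mon[of u1 u2] u by (simp add: power2_eq_square algebra_simps)
  then show ?thesis
    by (cases "norm (u1 - u2) = 0") (auto simp: mult_le_cancel_right)
qed

lemma qvi_solution_unique:
  assumes "qvi_solution g u1" "qvi_solution g u2"
  shows "u1 = u2"
proof -
  have "(m_A - \<alpha>_j) * norm (u1 - u2) \<le> 0"
    using qvi_solution_lipschitz[OF assms] by simp
  then show ?thesis
    using small by (simp add: mult_le_0_iff)
qed

lemma prox_j_exists:
  assumes "\<rho> > 0"
  shows "\<exists>p\<in>K. \<forall>v\<in>K. 0 \<le> inner (p - z) (v - p) + \<rho> * j \<eta> v - \<rho> * j \<eta> p"
proof -
  obtain L where "L-lipschitz_on K (j \<eta>)"
    using j_lip by blast
  then have "(\<rho> * L)-lipschitz_on K (\<lambda>v. \<rho> * j \<eta> v)"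
    using assms by (intro lipschitz_on_cmult_real_nonneg) auto
  moreover have "convex_on K (\<lambda>v. \<rho> * j \<eta> v)"
    using assms j_convex by (intro convex_on_cmul) auto
  ultimately show ?thesis
    using prox_exists[OF K(1,2)] by blast
qed

lemma prox_step_lipschitz:
  assumes p: "p1 \<in> K" "p2 \<in> K" and \<rho>: "0 \<le> \<rho>"
    and vi1: "\<forall>v\<in>K. 0 \<le> inner (p1 - z1) (v - p1) + \<rho> * j w1 v - \<rho> * j w1 p1"
    and vi2: "\<forall>v\<in>K. 0 \<le> inner (p2 - z2) (v - p2) + \<rho> * j w2 v - \<rho> * j w2 p2"
  shows "norm (p1 - p2) \<le> norm (z1 - z2) + \<rho> * \<alpha>_j * norm (w1 - w2)"
proof -
  have "0 \<le> inner (p1 - z1) (p2 - p1) + \<rho> * j w1 p2 - \<rho> * j w1 p1"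
    and "0 \<le> inner (p2 - z2) (p1 - p2) + \<rho> * j w2 p1 - \<rho> * j w2 p2"
    using vi1 vi2 p by auto
  moreover have "\<rho> * j w1 p2 - \<rho> * j w1 p1 + \<rho> * j w2 p1 - \<rho> * j w2 p2
      \<le> \<rho> * \<alpha>_j * norm (w1 - w2) * norm (p1 - p2)"
    using mult_left_mono[OF j_cross[OF p, of w1 w2] \<rho>] by (simp add: algebra_simps)
  moreover have "inner (p1 - z1) (p2 - p1) + inner (p2 - z2) (p1 - p2)
      = inner (z1 - z2) (p1 - p2) - inner (p1 - p2) (p1 - p2)"
    by (simp add: algebra_simps inner_commute)
  moreover have "inner (p1 - p2) (p1 - p2) = norm (p1 - p2) * norm (p1 - p2)"
    by (simp add: dot_square_norm power2_eq_square)
  moreover have "inner (z1 - z2) (p1 - p2) \<le> norm (z1 - z2) * norm (p1 - p2)"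
    by (rule norm_cauchy_schwarz)
  ultimately have "norm (p1 - p2) * norm (p1 - p2)
      \<le> (norm (z1 - z2) + \<rho> * \<alpha>_j * norm (w1 - w2)) * norm (p1 - p2)"
    by (simp add: distrib_right)
  moreover have "0 \<le> norm (z1 - z2) + \<rho> * \<alpha>_j * norm (w1 - w2)"
    using \<rho> alpha by simp
  ultimately show ?thesis
    by (cases "norm (p1 - p2) = 0") (auto simp: mult_le_cancel_right)
qed

lemma qvi_step_size:
  obtains \<rho> where "0 < \<rho>" "\<rho> * m_A \<le> 1" "\<rho> * L_A\<^sup>2 \<le> m_A - \<alpha>_j"
proof
  define \<rho> where "\<rho> = (m_A - \<alpha>_j) / (L_A\<^sup>2 + m_A\<^sup>2)"
  have m: "0 < m_A"
    using alpha small by linarith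
  then have d: "0 < L_A\<^sup>2 + m_A\<^sup>2"
    by (simp add: add_nonneg_pos)
  show "0 < \<rho>"
    using small d by (simp add: \<rho>_def)
  have "(m_A - \<alpha>_j) * m_A \<le> L_A\<^sup>2 + m_A\<^sup>2"
    using alpha m by (simp add: power2_eq_square algebra_simps add_increasing mult_nonneg_nonneg)
  then show "\<rho> * m_A \<le> 1"
    using d by (simp add: \<rho>_def field_simps)
  have "(m_A - \<alpha>_j) * L_A\<^sup>2 \<le> (m_A - \<alpha>_j) * (L_A\<^sup>2 + m_A\<^sup>2)"
    using small by (simp add: mult_left_mono)
  then show "\<rho> * L_A\<^sup>2 \<le> m_A - \<alpha>_j"
    using d by (simp add: \<rho>_def pos_divide_le_eq)
qed

lemma qvi_solution_exists: "\<exists>u. qvi_solution g u"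
proof -
  obtain \<rho> where \<rho>: "0 < \<rho>" "\<rho> * m_A \<le> 1" "\<rho> * L_A\<^sup>2 \<le> m_A - \<alpha>_j"
    by (rule qvi_step_size)
  \<comment> \<open>\<open>T\<close> is the proximal-gradient map; it is a contraction with constant \<open>\<kappa>\<close>.\<close>
  define z where "z w = w - \<rho> *\<^sub>R (A w - g)" for w
  define T where
    "T w = (SOME p. p \<in> K \<and> (\<forall>v\<in>K. 0 \<le> inner (p - z w) (v - p) + \<rho> * j w v - \<rho> * j w p))" for w
  have T: "T w \<in> K" "\<forall>v\<in>K. 0 \<le> inner (T w - z w) (v - T w) + \<rho> * j w v - \<rho> * j w (T w)" for w
    using someI_ex[OF prox_j_exists[OF \<rho>(1), of "z w" w, unfolded Bex_def]] unfolding T_def by auto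
  define \<kappa> where "\<kappa> = 1 - \<rho> * (m_A - \<alpha>_j) + \<rho>\<^sup>2 * L_A\<^sup>2 / 2"
  have "\<rho>\<^sup>2 * L_A\<^sup>2 \<le> \<rho> * (m_A - \<alpha>_j)"
    using mult_left_mono[OF \<rho>(3), of \<rho>] \<rho>(1) by (simp add: power2_eq_square mult.assoc)
  moreover have "0 \<le> \<rho> * \<alpha>_j" "0 \<le> \<rho>\<^sup>2 * L_A\<^sup>2" "0 < \<rho> * (m_A - \<alpha>_j)"
    using \<rho>(1) alpha small by simp_all
  ultimately have \<kappa>: "0 \<le> \<kappa>" "\<kappa> < 1"
    using \<rho>(2) unfolding \<kappa>_def right_diff_distrib by linarith+
  have "dist (T w1) (T w2) \<le> \<kappa> * dist w1 w2" for w1 w2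
  proof -
    have "norm (T w1 - T w2) \<le> norm (z w1 - z w2) + \<rho> * \<alpha>_j * norm (w1 - w2)"
      using prox_step_lipschitz[OF T(1) T(1) less_imp_le[OF \<rho>(1)] T(2) T(2)] .
    moreover have "z w1 - z w2 = (w1 - \<rho> *\<^sub>R A w1) - (w2 - \<rho> *\<^sub>R A w2)"
      by (simp add: z_def algebra_simps)
    then have "norm (z w1 - z w2) \<le> (1 - \<rho> * m_A + \<rho>\<^sup>2 * L_A\<^sup>2 / 2) * norm (w1 - w2)"
      using forward_step_lipschitz[OF A_mon[of w1 w2] A_lip[of w1 w2] less_imp_le[OF \<rho>(1)] \<rho>(2)] by simp
    ultimately show ?thesis
      by (simp add: dist_norm \<kappa>_def algebra_simps)
  qed
  then obtain u where u: "u \<in> K" "T u = u"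
    using Banach_fix[OF complete_eq_closed[THEN iffD2, OF K(2)] K(1) \<kappa>, of T] T(1) by blast
  have "0 \<le> inner (A u - g) (v - u) + j u v - j u u" if "v \<in> K" for v
  proof -
    have "0 \<le> \<rho> * (inner (A u - g) (v - u) + j u v - j u u)"
      using T(2)[of u] that unfolding u(2) by (simp add: z_def algebra_simps)
    then show ?thesis
      using \<rho>(1) by (simp add: zero_le_mult_iff)
  qed
  then show ?thesis
    using u(1) unfolding qvi_solution_def by blast
qed

definition qvi_solve :: "'a \<Rightarrow> 'a" where
  "qvi_solve g = (THE u. qvi_solution g u)"

lemma qvi_solution_iff_eq_qvi_solve: "qvi_solution g u \<longleftrightarrow> u = qvi_solve g"
  using qvi_solution_exists[of g] qvi_solution_unique theI[of "qvi_solution g"]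
  unfolding qvi_solve_def by metis

lemma qvi_solve_in_K: "qvi_solve g \<in> K"
  using qvi_solution_iff_eq_qvi_solve[of g "qvi_solve g"] by (simp add: qvi_solution_def)

lemma qvi_solve_lipschitz: "(1 / (m_A - \<alpha>_j))-lipschitz_on UNIV qvi_solve"
proof (rule lipschitz_onI)
  fix g1 g2 :: 'a
  have "(m_A - \<alpha>_j) * dist (qvi_solve g1) (qvi_solve g2) \<le> dist g1 g2"
    using qvi_solution_lipschitz qvi_solution_iff_eq_qvi_solve by (simp add: dist_norm)
  then show "dist (qvi_solve g1) (qvi_solve g2) \<le> 1 / (m_A - \<alpha>_j) * dist g1 g2"
    using small by (simp add: field_simps)
qed (use small in simp)

lemma zero_in_K: "0 \<in> K"
  using K cone_contains_0 by blast

lemma j_zero: "j \<eta> 0 = 0"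
  using j_homog[of 2 0 \<eta>] zero_in_K by simp

lemma Cset_if_variational_inequality:
  assumes p: "p \<in> K" and vi: "\<And>v. v \<in> K \<Longrightarrow> inner \<xi> (v - p) \<le> j \<eta> v - j \<eta> p"
  shows "\<xi> \<in> Cset K j \<eta>" "inner \<xi> p = j \<eta> p"
proof -
  have "2 *\<^sub>R p \<in> K"
    using K(3) p by (simp add: cone_def)
  then have "inner \<xi> p \<le> j \<eta> p"
    using vi[of "2 *\<^sub>R p"] j_homog[of 2 p \<eta>] p by (simp add: algebra_simps scaleR_2)
  moreover have "j \<eta> p \<le> inner \<xi> p"
    using vi[OF zero_in_K] by (simp add: j_zero)
  ultimately show "inner \<xi> p = j \<eta> p"
    by simp
  then show "\<xi> \<in> Cset K j \<eta>"
    using vi by (auto simp: Cset_def Jext_def inner_diff_right)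
qed

lemma j_self_le_if_Cset_bounded:
  assumes u: "u \<in> K" and bound: "\<And>\<xi>. \<xi> \<in> Cset K j u \<Longrightarrow> inner \<xi> u \<le> c"
  shows "j u u \<le> c"
proof -
  obtain L where L: "L-lipschitz_on K (j u)"
    using j_lip by blast
  have "0 \<le> (c - j u u) + \<tau> * (L\<^sup>2 / 4)" if \<tau>: "0 < \<tau>" for \<tau>
  proof -
    \<comment> \<open>The proximal point of \<open>\<tau> * j u\<close> at \<open>u\<close> yields an element of \<open>C(u)\<close> whose pairing
      with \<open>u\<close> is within \<open>\<tau> * L\<^sup>2 / 4\<close> of \<open>j u u\<close>.\<close>
    obtain p where p: "p \<in> K" and prox: "\<forall>v\<in>K. 0 \<le> inner (p - u) (v - p) + \<tau> * j u v - \<tau> * j u p"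
      using prox_j_exists[OF \<tau>] by blast
    define \<xi> where "\<xi> = (1 / \<tau>) *\<^sub>R (u - p)"
    have "inner \<xi> (v - p) \<le> j u v - j u p" if "v \<in> K" for v
      using prox that \<tau> by (simp add: \<xi>_def inner_diff_left field_simps)
    then have "\<xi> \<in> Cset K j u" "inner \<xi> p = j u p"
      using Cset_if_variational_inequality[OF p] by auto
    moreover have "inner \<xi> u = inner \<xi> p + (norm (u - p))\<^sup>2 / \<tau>"
    proof -
      have "inner \<xi> (u - p) = (norm (u - p))\<^sup>2 / \<tau>"
        by (simp add: \<xi>_def power2_norm_eq_inner)
      then show ?thesis
        by (simp add: inner_diff_right)
    qed
    moreover have "j u u - j u p \<le> L * norm (u - p)"
      using lipschitz_onD[OF L u p] by (simp add: dist_norm dist_real_def)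
    moreover have "L * norm (u - p) \<le> (norm (u - p))\<^sup>2 / \<tau> + \<tau> * (L\<^sup>2 / 4)"
      using \<tau> zero_le_power2[of "norm (u - p) - \<tau> * L / 2"]
      by (simp add: field_simps power2_eq_square)
    ultimately show ?thesis
      using bound by fastforce
  qed
  then show ?thesis
    using nonneg_if_nonneg_add_small_multiples[of "c - j u u" "L\<^sup>2 / 4"] by simp
qed

lemma qvi_solution_iff_normal_cone:
  assumes u: "u \<in> K"
  shows "qvi_solution (f t - s) u \<longleftrightarrow> - u \<in> normal_cone (Cset_t K j f u t) (A u + s)"
proof -
  define \<xi> where "\<xi> = f t - (A u + s)"
  have "qvi_solution (f t - s) u \<longleftrightarrow> (\<forall>v\<in>K. inner \<xi> (v - u) \<le> j u v - j u u)"
    using u by (auto simp: qvi_solution_def \<xi>_def algebra_simps)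
  also have "\<dots> \<longleftrightarrow> \<xi> \<in> Cset K j u \<and> (\<forall>\<zeta>\<in>Cset K j u. inner \<zeta> u \<le> inner \<xi> u)"
  proof
    assume "\<forall>v\<in>K. inner \<xi> (v - u) \<le> j u v - j u u"
    then have "\<xi> \<in> Cset K j u" "inner \<xi> u = j u u"
      using Cset_if_variational_inequality[OF u, of \<xi> u] by auto
    then show "\<xi> \<in> Cset K j u \<and> (\<forall>\<zeta>\<in>Cset K j u. inner \<zeta> u \<le> inner \<xi> u)"
      using u by (auto simp: Cset_iff)
  next
    assume \<xi>: "\<xi> \<in> Cset K j u \<and> (\<forall>\<zeta>\<in>Cset K j u. inner \<zeta> u \<le> inner \<xi> u)"
    then have "j u u \<le> inner \<xi> u"
      using j_self_le_if_Cset_bounded[OF u] by blast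
    then show "\<forall>v\<in>K. inner \<xi> (v - u) \<le> j u v - j u u"
      using \<xi> by (auto simp: Cset_iff inner_diff_right)
  qed
  finally show ?thesis
    unfolding neg_in_normal_cone_Cset_t_iff \<xi>_def .
qed

lemma eq_qvi_solve_iff_normal_cone:
  "u = qvi_solve (f t - s) \<longleftrightarrow> u \<in> K \<and> - u \<in> normal_cone (Cset_t K j f u t) (A u + s)"
  using qvi_solution_iff_normal_cone qvi_solution_iff_eq_qvi_solve qvi_solve_in_K by blast

end

lemma integral_le_exp_bound:
  fixes \<phi> :: "real \<Rightarrow> real"
  assumes \<phi>: "continuous_on {0..t} \<phi>" "\<And>s. s \<in> {0..t} \<Longrightarrow> \<phi> s \<le> M * exp (\<beta> * s)"
    and "0 \<le> t" "0 < \<beta>" "0 \<le> M"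
  shows "integral {0..t} \<phi> \<le> M * exp (\<beta> * t) / \<beta>"
proof -
  have "((\<lambda>s. exp (\<beta> * s) / \<beta>) has_vector_derivative exp (\<beta> * s)) (at s within {0..t})" for s
    using \<open>0 < \<beta>\<close>
    by (auto intro!: derivative_eq_intros simp: has_real_derivative_iff_has_vector_derivative[symmetric])
  then have "((\<lambda>s. exp (\<beta> * s)) has_integral (exp (\<beta> * t) / \<beta> - exp (\<beta> * 0) / \<beta>)) {0..t}"
    by (intro fundamental_theorem_of_calculus[OF \<open>0 \<le> t\<close>])
  then have "((\<lambda>s. M * exp (\<beta> * s)) has_integral M * ((exp (\<beta> * t) - 1) / \<beta>)) {0..t}"
    by (simp add: has_integral_mult_right diff_divide_distrib)
  then have "integral {0..t} \<phi> \<le> M * ((exp (\<beta> * t) - 1) / \<beta>)"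
    using has_integral_le[OF integrable_integral[OF integrable_continuous_interval[OF \<phi>(1)]]] \<phi>(2)
    by blast
  also have "\<dots> \<le> M * exp (\<beta> * t) / \<beta>"
    using assms(4,5) by (simp add: field_simps)
  finally show ?thesis .
qed

lemma continuous_nonneg_vanishes_if_le_integral:
  fixes \<phi> :: "real \<Rightarrow> real"
  assumes cont: "continuous_on {0..T} \<phi>" and nonneg: "\<And>t. t \<in> {0..T} \<Longrightarrow> 0 \<le> \<phi> t"
    and C: "0 < C" and le: "\<And>t. t \<in> {0..T} \<Longrightarrow> \<phi> t \<le> C * integral {0..t} \<phi>"
    and t: "t \<in> {0..T}"
  shows "\<phi> t = 0"
proof -
  define \<beta> where "\<beta> = 2 * C"
  have \<beta>: "0 < \<beta>"
    using C by (simp add: \<beta>_def)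
  have weighted: "continuous_on {0..T} (\<lambda>s. \<phi> s * exp (- \<beta> * s))"
    by (intro continuous_intros cont)
  \<comment> \<open>The maximum \<open>M\<close> of \<open>\<phi> s * exp (- \<beta> * s)\<close> turns out to satisfy \<open>M \<le> M / 2\<close>.\<close>
  obtain s0 where s0: "s0 \<in> {0..T}"
    and max: "\<And>s. s \<in> {0..T} \<Longrightarrow> \<phi> s * exp (- \<beta> * s) \<le> \<phi> s0 * exp (- \<beta> * s0)"
    using continuous_attains_sup[OF compact_Icc _ weighted] t by fastforce
  define M where "M = \<phi> s0 * exp (- \<beta> * s0)"
  have M: "0 \<le> M"
    using nonneg[OF s0] by (simp add: M_def)
  have bound: "\<phi> s \<le> M * exp (\<beta> * s)" if "s \<in> {0..T}" for s
    using mult_right_mono[OF max[OF that], of "exp (\<beta> * s)"] by (simp add: M_def mult.assoc flip: exp_add)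
  have half: "\<phi> s * exp (- \<beta> * s) \<le> M / 2" if s: "s \<in> {0..T}" for s
  proof -
    have "integral {0..s} \<phi> \<le> M * exp (\<beta> * s) / \<beta>"
      using s by (intro integral_le_exp_bound continuous_on_subset[OF cont] bound \<beta> M) auto
    then have "C * integral {0..s} \<phi> \<le> C * (M * exp (\<beta> * s) / \<beta>)"
      using C by (intro mult_left_mono) simp_all
    also have "\<dots> = M * exp (\<beta> * s) / 2"
      using C by (simp add: \<beta>_def)
    finally have "\<phi> s \<le> M * exp (\<beta> * s) / 2"
      using le[OF s] by linarith
    then have "\<phi> s * exp (- \<beta> * s) \<le> M * exp (\<beta> * s) / 2 * exp (- \<beta> * s)"
      by (rule mult_right_mono) simp
    also have "\<dots> = M / 2"
      by (simp flip: exp_add)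
    finally show ?thesis .
  qed
  have "M \<le> 0"
    using half[OF s0] by (simp add: M_def)
  then have "\<phi> t * exp (- \<beta> * t) \<le> 0"
    using max[OF t] by (simp add: M_def)
  then show ?thesis
    using nonneg[OF t] by (simp add: mult_le_0_iff)
qed

definition clamp_Icc :: "real \<Rightarrow> real \<Rightarrow> real" where
  "clamp_Icc T t = max 0 (min t T)"

lemma clamp_Icc_in: "0 \<le> T \<Longrightarrow> clamp_Icc T t \<in> {0..T}"
  by (auto simp: clamp_Icc_def max_def min_def)

lemma clamp_Icc_id: "t \<in> {0..T} \<Longrightarrow> clamp_Icc T t = t"
  by (simp add: clamp_Icc_def)

lemma continuous_on_clamp_Icc: "continuous_on S (clamp_Icc T)"
  unfolding clamp_Icc_def by (intro continuous_intros)

lemma clamp_Icc_in_bcontfun: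
  assumes "0 \<le> T" "continuous_on {0..T} g"
  shows "(\<lambda>t. g (clamp_Icc T t)) \<in> bcontfun"
proof -
  have "continuous_on UNIV (\<lambda>t. g (clamp_Icc T t))"
    by (rule continuous_on_compose2[OF assms(2) continuous_on_clamp_Icc]) (use clamp_Icc_in assms(1) in auto)
  moreover have "range (\<lambda>t. g (clamp_Icc T t)) \<subseteq> g ` {0..T}"
    using clamp_Icc_in assms(1) by auto
  then have "bounded (range (\<lambda>t. g (clamp_Icc T t)))"
    by (rule bounded_subset[OF compact_imp_bounded[OF compact_continuous_image[OF assms(2) compact_Icc]]])
  ultimately show ?thesis
    unfolding bcontfun_def by simp
qed

text \<open>Bielecki's trick: a fixed point on \<open>{0..T}\<close> is sought as \<open>exp_weighted (2 * C) T F\<close> with \<open>F\<close>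
  in the complete space of bounded continuous functions; the exponential weight turns the Volterra
  estimate into a contraction with constant \<open>1/2\<close>.\<close>

definition exp_weighted :: "real \<Rightarrow> real \<Rightarrow> (real \<Rightarrow>\<^sub>C 'a::real_normed_vector) \<Rightarrow> real \<Rightarrow> 'a" where
  "exp_weighted \<beta> T F s = exp (\<beta> * clamp_Icc T s) *\<^sub>R apply_bcontfun F s"

lemma continuous_on_exp_weighted: "continuous_on S (exp_weighted \<beta> T F)"
  unfolding exp_weighted_def
  by (intro continuous_intros continuous_on_compose2[OF continuous_on_exp continuous_on_clamp_Icc]
      continuous_on_mult_left) auto

lemma norm_exp_weighted_diff_le:
  assumes "s \<in> {0..T}"
  shows "norm (exp_weighted \<beta> T F s - exp_weighted \<beta> T G s) \<le> dist F G * exp (\<beta> * s)"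
proof -
  have "norm (exp_weighted \<beta> T F s - exp_weighted \<beta> T G s)
      = exp (\<beta> * s) * dist (apply_bcontfun F s) (apply_bcontfun G s)"
    using assms by (simp add: exp_weighted_def clamp_Icc_id dist_norm flip: scaleR_diff_right)
  also have "\<dots> \<le> exp (\<beta> * s) * dist F G"
    by (simp add: dist_bounded)
  finally show ?thesis
    by (simp add: mult.commute)
qed

lemma volterra_exp_weighted_contraction:
  fixes \<Lambda> :: "(real \<Rightarrow> 'a::real_normed_vector) \<Rightarrow> real \<Rightarrow> 'a"
  assumes C: "0 < C" and \<tau>: "\<tau> \<in> {0..T}"
    and lip: "\<And>u v. continuous_on UNIV u \<Longrightarrow> continuous_on UNIV v \<Longrightarrow>
        norm (\<Lambda> u \<tau> - \<Lambda> v \<tau>) \<le> C * integral {0..\<tau>} (\<lambda>s. norm (u s - v s))"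
  defines "E \<equiv> exp_weighted (2 * C) T :: (real \<Rightarrow>\<^sub>C 'a) \<Rightarrow> real \<Rightarrow> 'a"
  shows "exp (- (2 * C) * \<tau>) * norm (\<Lambda> (E F) \<tau> - \<Lambda> (E G) \<tau>) \<le> 1/2 * dist F G"
proof -
  have "norm (\<Lambda> (E F) \<tau> - \<Lambda> (E G) \<tau>) \<le> C * integral {0..\<tau>} (\<lambda>s. norm (E F s - E G s))"
    unfolding E_def by (intro lip continuous_on_exp_weighted)
  also have "\<dots> \<le> C * (dist F G * exp (2 * C * \<tau>) / (2 * C))"
    using \<tau> C unfolding E_def
    by (intro mult_left_mono integral_le_exp_bound continuous_intros continuous_on_exp_weighted
        norm_exp_weighted_diff_le) auto
  finally have "exp (- (2 * C) * \<tau>) * norm (\<Lambda> (E F) \<tau> - \<Lambda> (E G) \<tau>)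
      \<le> exp (- (2 * C) * \<tau>) * (C * (dist F G * exp (2 * C * \<tau>) / (2 * C)))"
    by (rule mult_left_mono) simp
  also have "\<dots> = 1/2 * dist F G"
  proof -
    have "exp (- (2 * C) * \<tau>) * exp (2 * C * \<tau>) = 1"
      by (simp flip: exp_add)
    then show ?thesis
      using C by (simp add: field_simps)
  qed
  finally show ?thesis .
qed

lemma volterra_fixed_point_exists:
  fixes \<Lambda> :: "(real \<Rightarrow> 'a::{real_normed_vector, complete_space}) \<Rightarrow> real \<Rightarrow> 'a"
  assumes T: "0 \<le> T" and C: "0 < C"
    and cont: "\<And>u. continuous_on UNIV u \<Longrightarrow> continuous_on {0..T} (\<Lambda> u)"
    and lip: "\<And>u v t. continuous_on UNIV u \<Longrightarrow> continuous_on UNIV v \<Longrightarrow> t \<in> {0..T} \<Longrightarrow>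
        norm (\<Lambda> u t - \<Lambda> v t) \<le> C * integral {0..t} (\<lambda>s. norm (u s - v s))"
  shows "\<exists>u. continuous_on UNIV u \<and> (\<forall>t\<in>{0..T}. u t = \<Lambda> u t)"
proof -
  define E :: "(real \<Rightarrow>\<^sub>C 'a) \<Rightarrow> real \<Rightarrow> 'a" where "E = exp_weighted (2 * C) T"
  define h where "h F \<tau> = exp (- (2 * C) * \<tau>) *\<^sub>R \<Lambda> (E F) \<tau>" for F \<tau>
  have "continuous_on {0..T} (h F)" for F
    unfolding h_def E_def by (intro continuous_intros cont continuous_on_exp_weighted)
  then have h: "(\<lambda>t. h F (clamp_Icc T t)) \<in> bcontfun" for F
    by (rule clamp_Icc_in_bcontfun[OF T])
  define \<Psi> where "\<Psi> F = Bcontfun (\<lambda>t. h F (clamp_Icc T t))" for F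
  have \<Psi>: "apply_bcontfun (\<Psi> F) t = h F (clamp_Icc T t)" for F t
    unfolding \<Psi>_def using Bcontfun_inverse[OF h] by simp
  have "dist (\<Psi> F) (\<Psi> G) \<le> 1/2 * dist F G" for F G
  proof (rule dist_bound)
    fix t
    have "dist (apply_bcontfun (\<Psi> F) t) (apply_bcontfun (\<Psi> G) t)
        = exp (- (2 * C) * clamp_Icc T t) * norm (\<Lambda> (E F) (clamp_Icc T t) - \<Lambda> (E G) (clamp_Icc T t))"
      by (simp add: \<Psi> h_def dist_norm flip: scaleR_diff_right)
    also have "\<dots> \<le> 1/2 * dist F G"
      unfolding E_def using C clamp_Icc_in[OF T] lip by (intro volterra_exp_weighted_contraction) auto
    finally show "dist (apply_bcontfun (\<Psi> F) t) (apply_bcontfun (\<Psi> G) t) \<le> 1/2 * dist F G" .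
  qed
  then obtain F where F: "\<Psi> F = F"
    using banach_fix_type[of "1/2" \<Psi>] by auto
  have "E F t = \<Lambda> (E F) t" if "t \<in> {0..T}" for t
  proof -
    have "E F t = exp (2 * C * t) *\<^sub>R h F t"
      using that F \<Psi>[of F t] by (simp add: E_def exp_weighted_def clamp_Icc_id)
    then show ?thesis
      by (simp add: h_def flip: exp_add)
  qed
  then show ?thesis
    using continuous_on_exp_weighted unfolding E_def by blast
qed

lemma history_dependentE:
  assumes "history_dependent I \<Lambda>" "compact J" "J \<subseteq> I"
  obtains C where "0 < C" "\<And>u v t. continuous_on I u \<Longrightarrow> continuous_on I v \<Longrightarrow> t \<in> J \<Longrightarrow>
      norm (\<Lambda> u t - \<Lambda> v t) \<le> C * integral {0..t} (\<lambda>s. norm (u s - v s))"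
  using assms unfolding history_dependent_def by meson

lemma history_dependent_causal:
  assumes \<Lambda>: "history_dependent I \<Lambda>" and t: "t \<in> I"
    and uv: "continuous_on I u" "continuous_on I v" "\<And>s. s \<in> {0..t} \<Longrightarrow> u s = v s"
  shows "\<Lambda> u t = \<Lambda> v t"
proof -
  have "{t} \<subseteq> I"
    using t by simp
  then obtain C where "0 < C" and lip: "\<And>u v s. continuous_on I u \<Longrightarrow> continuous_on I v \<Longrightarrow> s \<in> {t} \<Longrightarrow>
      norm (\<Lambda> u s - \<Lambda> v s) \<le> C * integral {0..s} (\<lambda>r. norm (u r - v r))"
    using history_dependentE[OF \<Lambda> compact_sing] by blast
  have "norm (\<Lambda> u t - \<Lambda> v t) \<le> C * integral {0..t} (\<lambda>r. norm (u r - v r))"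
    using lip[OF uv(1,2)] by simp
  also have "integral {0..t} (\<lambda>r. norm (u r - v r)) = integral {0..t} (\<lambda>r. 0)"
    by (rule integral_cong) (simp add: uv(3))
  finally show ?thesis
    by simp
qed

lemma history_dependent_fixed_point_unique_on:
  assumes \<Lambda>: "history_dependent I \<Lambda>" and T: "{0..T} \<subseteq> I"
    and u: "continuous_on I u" "\<And>t. t \<in> {0..T} \<Longrightarrow> u t = \<Lambda> u t"
    and v: "continuous_on I v" "\<And>t. t \<in> {0..T} \<Longrightarrow> v t = \<Lambda> v t"
    and t: "t \<in> {0..T}"
  shows "u t = v t"
proof -
  obtain C where C: "0 < C" and lip: "\<And>u v t. continuous_on I u \<Longrightarrow> continuous_on I v \<Longrightarrow>
      t \<in> {0..T} \<Longrightarrow> norm (\<Lambda> u t - \<Lambda> v t) \<le> C * integral {0..t} (\<lambda>s. norm (u s - v s))"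
    using history_dependentE[OF \<Lambda> compact_Icc T] by blast
  have cont: "continuous_on {0..T} (\<lambda>s. norm (u s - v s))"
    using T by (intro continuous_intros continuous_on_subset[OF u(1)] continuous_on_subset[OF v(1)])
  have le: "norm (u s - v s) \<le> C * integral {0..s} (\<lambda>s. norm (u s - v s))" if "s \<in> {0..T}" for s
    using lip[OF u(1) v(1) that] u(2)[OF that] v(2)[OF that] by simp
  have "norm (u t - v t) = 0"
    by (rule continuous_nonneg_vanishes_if_le_integral[OF cont _ C le t]) simp
  then show ?thesis
    by simp
qed

lemma history_dependent_fixed_point_exists_on:
  fixes \<Lambda> :: "(real \<Rightarrow> 'a::{real_normed_vector, complete_space}) \<Rightarrow> real \<Rightarrow> 'a"
  assumes \<Lambda>: "history_dependent I \<Lambda>" and maps: "\<And>u. continuous_on I u \<Longrightarrow> continuous_on I (\<Lambda> u)"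
    and T: "0 \<le> T" "{0..T} \<subseteq> I"
  shows "\<exists>u. continuous_on UNIV u \<and> (\<forall>t\<in>{0..T}. u t = \<Lambda> u t)"
proof -
  obtain C where C: "0 < C" and lip: "\<And>u v t. continuous_on I u \<Longrightarrow> continuous_on I v \<Longrightarrow> t \<in> {0..T} \<Longrightarrow>
      norm (\<Lambda> u t - \<Lambda> v t) \<le> C * integral {0..t} (\<lambda>s. norm (u s - v s))"
    using history_dependentE[OF \<Lambda> compact_Icc T(2)] by blast
  show ?thesis
  proof (rule volterra_fixed_point_exists[OF T(1) C])
    fix u :: "real \<Rightarrow> 'a" assume "continuous_on UNIV u"
    then have "continuous_on I (\<Lambda> u)"
      using maps continuous_on_subset by blast
    then show "continuous_on {0..T} (\<Lambda> u)"
      using T(2) by (rule continuous_on_subset)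
  next
    fix u v :: "real \<Rightarrow> 'a" and t
    assume "continuous_on UNIV u" "continuous_on UNIV v" "t \<in> {0..T}"
    then show "norm (\<Lambda> u t - \<Lambda> v t) \<le> C * integral {0..t} (\<lambda>s. norm (u s - v s))"
      using lip continuous_on_subset[OF _ subset_UNIV] by meson
  qed
qed

lemma continuous_on_glue_nat_intervals:
  fixes U :: "nat \<Rightarrow> real \<Rightarrow> 'a::topological_space"
  assumes cont: "\<And>n. continuous_on {0..real n} (U n)"
    and agree: "\<And>n k t. n \<le> k \<Longrightarrow> t \<in> {0..real n} \<Longrightarrow> U k t = U n t"
  shows "continuous_on {0..} (\<lambda>t. U (nat \<lceil>t\<rceil>) t)" (is "continuous_on _ ?u")
    and "\<And>n t. t \<in> {0..real n} \<Longrightarrow> U (nat \<lceil>t\<rceil>) t = U n t"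
proof -
  show eq: "U (nat \<lceil>t\<rceil>) t = U n t" if "t \<in> {0..real n}" for n t
    using that agree[of "nat \<lceil>t\<rceil>" n t] agree[of "nat \<lceil>t\<rceil>" "nat \<lceil>t\<rceil>" t]
    by (simp add: nat_le_iff ceiling_le_iff)
  show "continuous_on {0..} ?u"
    unfolding continuous_on_eq_continuous_within
  proof
    fix x :: real assume x: "x \<in> {0..}"
    define N where "N = nat \<lceil>x\<rceil> + 1"
    have xN: "x < real N"
      unfolding N_def by linarith
    have "continuous_on {0..real N} ?u"
      using cont[of N] by (rule continuous_on_cong[THEN iffD1, rotated 2]) (auto intro: eq[symmetric])
    then have "continuous (at x within {0..real N}) ?u"
      using x xN by (simp add: continuous_on_eq_continuous_within)
    moreover have "at x within {0..} = at x within {0..real N}"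
      by (rule at_within_nhd[of x "{..<real N}"]) (use xN in auto)
    ultimately show "continuous (at x within {0..}) ?u"
      by simp
  qed
qed

lemma history_dependent_fixed_point_unique:
  assumes \<Lambda>: "history_dependent I \<Lambda>" and I: "(\<exists>T>0. I = {0..T}) \<or> I = {0..}"
    and u: "continuous_on I u" "\<And>t. t \<in> I \<Longrightarrow> u t = \<Lambda> u t"
    and v: "continuous_on I v" "\<And>t. t \<in> I \<Longrightarrow> v t = \<Lambda> v t"
    and t: "t \<in> I"
  shows "u t = v t"
proof -
  have sub: "{0..t} \<subseteq> I" and "t \<in> {0..t}"
    using I t by auto
  have "u s = \<Lambda> u s" "v s = \<Lambda> v s" if "s \<in> {0..t}" for s
    using sub that by (intro u(2) v(2); blast)+
  then show ?thesis
    using history_dependent_fixed_point_unique_on[OF \<Lambda> sub u(1) _ v(1) _ \<open>t \<in> {0..t}\<close>] by blast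
qed

lemma history_dependent_fixed_point_exists_halfline:
  fixes \<Lambda> :: "(real \<Rightarrow> 'a::{real_normed_vector, complete_space}) \<Rightarrow> real \<Rightarrow> 'a"
  assumes \<Lambda>: "history_dependent {0..} \<Lambda>"
    and maps: "\<And>u. continuous_on {0..} u \<Longrightarrow> continuous_on {0..} (\<Lambda> u)"
  shows "\<exists>u. continuous_on {0..} u \<and> (\<forall>t\<in>{0..}. u t = \<Lambda> u t)"
proof -
  have "\<exists>v. continuous_on UNIV v \<and> (\<forall>t\<in>{0..real n}. v t = \<Lambda> v t)" for n
    using history_dependent_fixed_point_exists_on[OF \<Lambda> maps] by simp
  then obtain U where U_cont: "\<And>n. continuous_on UNIV (U n)"
    and U_fix: "\<And>n t. t \<in> {0..real n} \<Longrightarrow> U n t = \<Lambda> (U n) t"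
    by metis
  have U_cont': "continuous_on S (U n)" for n S
    using continuous_on_subset[OF U_cont subset_UNIV] .
  have agree: "U k t = U n t" if nk: "n \<le> k" and t: "t \<in> {0..real n}" for n k t
  proof (rule history_dependent_fixed_point_unique_on[OF \<Lambda> _ U_cont' _ U_cont' _ t])
    show "{0..real n} \<subseteq> {0..}"
      by auto
    fix s assume s: "s \<in> {0..real n}"
    then show "U n s = \<Lambda> (U n) s"
      by (rule U_fix)
    from s nk have "s \<in> {0..real k}"
      by auto
    then show "U k s = \<Lambda> (U k) s"
      by (rule U_fix)
  qed
  define u where "u t = U (nat \<lceil>t\<rceil>) t" for t
  have u: "continuous_on {0..} u" "\<And>n t. t \<in> {0..real n} \<Longrightarrow> u t = U n t"
    using continuous_on_glue_nat_intervals[of U, OF U_cont' agree] unfolding u_def by auto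
  have "u t = \<Lambda> u t" if t: "t \<in> {0..}" for t
  proof -
    define n where "n = nat \<lceil>t\<rceil>"
    have tn: "t \<in> {0..real n}"
      using t unfolding n_def by (simp; linarith)
    have "\<Lambda> (U n) t = \<Lambda> u t"
    proof (rule history_dependent_causal[OF \<Lambda> t U_cont' u(1)])
      fix s assume "s \<in> {0..t}"
      then have "s \<in> {0..real n}"
        using tn by auto
      then show "U n s = u s"
        by (rule u(2)[symmetric])
    qed
    then show ?thesis
      using u(2)[OF tn] U_fix[OF tn] by simp
  qed
  then show ?thesis
    using u(1) by blast
qed

lemma history_dependent_fixed_point_exists:
  fixes \<Lambda> :: "(real \<Rightarrow> 'a::{real_normed_vector, complete_space}) \<Rightarrow> real \<Rightarrow> 'a"
  assumes \<Lambda>: "history_dependent I \<Lambda>" and maps: "\<And>u. continuous_on I u \<Longrightarrow> continuous_on I (\<Lambda> u)"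
    and I: "(\<exists>T>0. I = {0..T}) \<or> I = {0..}"
  shows "\<exists>u. continuous_on I u \<and> (\<forall>t\<in>I. u t = \<Lambda> u t)"
  using I
proof
  assume "\<exists>T>0. I = {0..T}"
  then obtain T where T: "0 < T" "I = {0..T}"
    by blast
  then obtain u where "continuous_on UNIV u" "\<forall>t\<in>I. u t = \<Lambda> u t"
    using history_dependent_fixed_point_exists_on[OF \<Lambda> maps, of T] by auto
  then show ?thesis
    using continuous_on_subset[OF _ subset_UNIV] by blast
next
  assume "I = {0..}"
  then show ?thesis
    using history_dependent_fixed_point_exists_halfline \<Lambda> maps by blast
qed

lemma history_dependent_lipschitz_comp:
  assumes S: "history_dependent I S" and P: "c-lipschitz_on UNIV P" "0 < c"
  shows "history_dependent I (\<lambda>u t. P (f t - S u t))"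
  unfolding history_dependent_def
proof (intro allI impI)
  fix J assume J: "compact J \<and> J \<subseteq> I"
  then obtain L where L: "0 < L" and lip: "\<And>u v t. continuous_on I u \<Longrightarrow> continuous_on I v \<Longrightarrow> t \<in> J \<Longrightarrow>
      norm (S u t - S v t) \<le> L * integral {0..t} (\<lambda>s. norm (u s - v s))"
    using history_dependentE[OF S conjunct1[OF J] conjunct2[OF J]] by blast
  have "norm (P (f t - S u t) - P (f t - S v t)) \<le> c * L * integral {0..t} (\<lambda>s. norm (u s - v s))"
    if "continuous_on I u" "continuous_on I v" "t \<in> J" for u v t
  proof -
    have "norm (P (f t - S u t) - P (f t - S v t)) \<le> c * norm (S u t - S v t)"
      using lipschitz_onD[OF P(1), of "f t - S u t" "f t - S v t"] by (simp add: dist_norm norm_minus_commute)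
    also have "\<dots> \<le> c * (L * integral {0..t} (\<lambda>s. norm (u s - v s)))"
      using lip[OF that] P(2) by (simp add: mult_left_mono)
    finally show ?thesis
      by (simp add: mult.assoc)
  qed
  then show "\<exists>C>0. \<forall>u v t. continuous_on I u \<and> continuous_on I v \<and> t \<in> J \<longrightarrow>
      norm (P (f t - S u t) - P (f t - S v t)) \<le> C * integral {0..t} (\<lambda>s. norm (u s - v s))"
    using L P(2) by (intro exI[of _ "c * L"]) auto
qed

theorem corollary3p2:
  fixes K :: "'a::{real_inner, complete_space} set"
    and I :: "real set"
    and A :: "'a \<Rightarrow> 'a"
    and f :: "real \<Rightarrow> 'a"
    and S :: "(real \<Rightarrow> 'a) \<Rightarrow> (real \<Rightarrow> 'a)"
    and j :: "'a \<Rightarrow> 'a \<Rightarrow> real"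
    and m_A L_A \<alpha>_j :: real
  assumes I: "(\<exists>T>0. I = {0..T}) \<or> I = {0..}"
    and K: "K \<noteq> {}" "closed K" "convex K" "cone K"
    and A_mon: "\<And>u v. inner (A u - A v) (u - v) \<ge> m_A * (norm (u - v))\<^sup>2"
    and A_lip: "\<And>u v. norm (A u - A v) \<le> L_A * norm (u - v)"
    and mL: "m_A > 0" "L_A > 0"
    and f: "continuous_on I f"
    and S_maps: "\<And>u. continuous_on I u \<Longrightarrow> continuous_on I (S u)"
    and S_hist: "history_dependent I S"
    and j_convex: "\<And>\<eta>. convex_on K (j \<eta>)"
    and j_homog: "\<And>\<eta> c v. c > 0 \<Longrightarrow> v \<in> K \<Longrightarrow> j \<eta> (c *\<^sub>R v) = c * j \<eta> v"
    and j_lip: "\<And>\<eta>. \<exists>L. L-lipschitz_on K (j \<eta>)"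
    and alpha: "\<alpha>_j \<ge> 0"
    and j_cross: "\<And>\<eta>1 \<eta>2 v1 v2. v1 \<in> K \<Longrightarrow> v2 \<in> K \<Longrightarrow>
        j \<eta>1 v2 - j \<eta>1 v1 + j \<eta>2 v1 - j \<eta>2 v2 \<le> \<alpha>_j * norm (\<eta>1 - \<eta>2) * norm (v1 - v2)"
    and small: "\<alpha>_j + 1 < m_A"
  shows "(\<exists>u. continuous_on I u \<and> (\<forall>t\<in>I. u t \<in> K) \<and>
            (\<forall>t\<in>I. - u t \<in> normal_cone (Cset_t K j f (u t) t) (A (u t) + S u t)))
       \<and> (\<forall>u1 u2. (continuous_on I u1 \<and> (\<forall>t\<in>I. u1 t \<in> K) \<and>
            (\<forall>t\<in>I. - u1 t \<in> normal_cone (Cset_t K j f (u1 t) t) (A (u1 t) + S u1 t)))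
          \<and> (continuous_on I u2 \<and> (\<forall>t\<in>I. u2 t \<in> K) \<and>
            (\<forall>t\<in>I. - u2 t \<in> normal_cone (Cset_t K j f (u2 t) t) (A (u2 t) + S u2 t)))
          \<longrightarrow> (\<forall>t\<in>I. u1 t = u2 t))"
proof -
  interpret elliptic_qvi K A j m_A L_A \<alpha>_j
    using K A_mon A_lip j_convex j_homog j_lip alpha j_cross small by unfold_locales auto
  define \<Lambda> where "\<Lambda> u t = qvi_solve (f t - S u t)" for u t
  have "0 < 1 / (m_A - \<alpha>_j)"
    using small by simp
  then have \<Lambda>_hist: "history_dependent I \<Lambda>"
    unfolding \<Lambda>_def by (rule history_dependent_lipschitz_comp[OF S_hist qvi_solve_lipschitz])
  have \<Lambda>_maps: "continuous_on I (\<Lambda> u)" if "continuous_on I u" for u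
    unfolding \<Lambda>_def
    by (rule continuous_on_compose2[OF lipschitz_on_continuous_on[OF qvi_solve_lipschitz]])
       (auto intro: continuous_on_diff f S_maps that)
  have solves_iff: "(\<forall>t\<in>I. u t \<in> K) \<and> (\<forall>t\<in>I. - u t \<in> normal_cone (Cset_t K j f (u t) t) (A (u t) + S u t))
      \<longleftrightarrow> (\<forall>t\<in>I. u t = \<Lambda> u t)" for u
    unfolding \<Lambda>_def eq_qvi_solve_iff_normal_cone by blast
  show ?thesis
    unfolding solves_iff
    using history_dependent_fixed_point_exists[OF \<Lambda>_hist \<Lambda>_maps I]
      history_dependent_fixed_point_unique[OF \<Lambda>_hist I] by blast
qed

end
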